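(* Let $X$ be a finite, simple, connected $3$-valent plane graph such that the number of edges surrounding each face is divisible by $3$. Then there exists an edge numbering $\nu\colon E(X)\to\{1,2,3\}$ such that, at every vertex $p\in V(X)$, the three edges having $p$ as an endpoint receive the numbers $1,2,3$ in this cyclic order with respect to the positive (counterclockwise) orientation around $p$. *)

theory Defs
  imports Main
begin

text \<open>A plane embedding is encoded combinatorially by a rotation system:
  rot v is the cyclic successor (counterclockwise) among the neighbours of v.\<close>

definition nbrs :: "'a set set \<Rightarrow> 'a \<Rightarrow> 'a set" where
  "nbrs E v = {u. {v, u} \<in> E}"

definition simple_graph :: "'a set \<Rightarrow> 'a set set \<Rightarrow> bool" where
  "simple_graph V E \<longleftrightarrow> finite V \<and>
     (\<forall>e\<in>E. \<exists>u v. u \<noteq> v \<and> u \<in> V \<and> v \<in> V \<and> e = {u, v})"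

definition cubic :: "'a set \<Rightarrow> 'a set set \<Rightarrow> bool" where
  "cubic V E \<longleftrightarrow> (\<forall>v\<in>V. card (nbrs E v) = 3)"

definition connected_graph :: "'a set \<Rightarrow> 'a set set \<Rightarrow> bool" where
  "connected_graph V E \<longleftrightarrow>
     (\<forall>u\<in>V. \<forall>v\<in>V. (u, v) \<in> {(x, y). {x, y} \<in> E}\<^sup>*)"

definition rotation_system :: "'a set \<Rightarrow> 'a set set \<Rightarrow> ('a \<Rightarrow> 'a \<Rightarrow> 'a) \<Rightarrow> bool" where
  "rotation_system V E rot \<longleftrightarrow>
     (\<forall>v\<in>V. bij_betw (rot v) (nbrs E v) (nbrs E v) \<and>
        (\<forall>u\<in>nbrs E v. \<forall>w\<in>nbrs E v. \<exists>k. (rot v ^^ k) u = w))"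

definition darts :: "'a set set \<Rightarrow> ('a \<times> 'a) set" where
  "darts E = {(u, v). {u, v} \<in> E}"

definition face_step :: "('a \<Rightarrow> 'a \<Rightarrow> 'a) \<Rightarrow> 'a \<times> 'a \<Rightarrow> 'a \<times> 'a" where
  "face_step rot d = (snd d, rot (snd d) (fst d))"

definition face_orbit :: "('a \<Rightarrow> 'a \<Rightarrow> 'a) \<Rightarrow> 'a \<times> 'a \<Rightarrow> ('a \<times> 'a) set" where
  "face_orbit rot d = {(face_step rot ^^ k) d | k. True}"

definition faces :: "'a set set \<Rightarrow> ('a \<Rightarrow> 'a \<Rightarrow> 'a) \<Rightarrow> ('a \<times> 'a) set set" where
  "faces E rot = face_orbit rot ` darts E"

text \<open>A connected graph with rotation system is a plane graph (the embedding
  is in the sphere/plane) iff Euler's formula V - E + F = 2 holds.\<close>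
definition plane_embedding :: "'a set \<Rightarrow> 'a set set \<Rightarrow> ('a \<Rightarrow> 'a \<Rightarrow> 'a) \<Rightarrow> bool" where
  "plane_embedding V E rot \<longleftrightarrow> rotation_system V E rot \<and>
     int (card V) - int (card E) + int (card (faces E rot)) = 2"

end

theory Submission
  imports Defs Complex_Main "HOL-Combinatorics.Transposition"
begin

text \<open>
  Lift the darts of the graph to a threefold cover with levels 0, 1, 2: the dart d on level i
  is joined to the next dart counterclockwise around its tail on level i + 1 (mod 3), and to
  the reversed dart on level i. The required edge numbering is a sheet of this cover, i.e. a
  connected component meeting every fibre exactly once.

  Turning, reversing and their product (which walks along faces) are permutations of the
  cover. As all vertex degrees and face lengths are divisible by 3, they have at least 3V, 3E
  and 3F cycles. The genus of each component of this hypermap is nonnegative: the three cycle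
  counts add up to at most the size 6E of the cover plus twice the number of components. With
  V - E + F = 2 this forces at least three components, and since each component meets each
  three-element fibre, it meets it exactly once.
\<close>

definition equivcl :: "('b \<times> 'b) set \<Rightarrow> ('b \<times> 'b) set" where
  "equivcl G = (G \<union> G\<inverse>)\<^sup>*"

lemma equiv_equivcl: "equiv UNIV (equivcl G)"
  unfolding equivcl_def
  by (intro equivI refl_rtrancl sym_rtrancl trans_rtrancl) (auto simp: sym_Un_converse)

lemma equivcl_refl [simp]: "(x, x) \<in> equivcl G"
  by (simp add: equivcl_def)

lemma equivcl_sym: "(x, y) \<in> equivcl G \<Longrightarrow> (y, x) \<in> equivcl G"
  using equiv_equivcl[of G] unfolding equiv_def sym_def by blast

lemma equivcl_trans: "(x, y) \<in> equivcl G \<Longrightarrow> (y, z) \<in> equivcl G \<Longrightarrow> (x, z) \<in> equivcl G"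
  unfolding equivcl_def by (rule rtrancl_trans)

lemma equivcl_incl: "(x, y) \<in> G \<Longrightarrow> (x, y) \<in> equivcl G"
  by (auto simp: equivcl_def)

lemma equivcl_least:
  assumes "equiv UNIV Q" "G \<subseteq> Q"
  shows "equivcl G \<subseteq> Q"
proof -
  have "G \<union> G\<inverse> \<subseteq> Q" using assms by (auto elim: equivE dest: symD)
  then have "(G \<union> G\<inverse>)\<^sup>* \<subseteq> Q\<^sup>*" by (rule rtrancl_mono)
  also have "Q\<^sup>* = Q"
    using assms(1) by (auto simp: rtrancl_trancl_reflcl equiv_def refl_on_def simp del: reflcl_trancl)
  finally show ?thesis by (simp add: equivcl_def)
qed

lemma equivcl_subsetI: "G \<subseteq> equivcl H \<Longrightarrow> equivcl G \<subseteq> equivcl H"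
  by (rule equivcl_least[OF equiv_equivcl])

lemma equivcl_mono: "G \<subseteq> H \<Longrightarrow> equivcl G \<subseteq> equivcl H"
  by (rule equivcl_subsetI) (auto intro: equivcl_incl)

lemma equivcl_insert_absorb: "(x, y) \<in> equivcl G \<Longrightarrow> equivcl (insert (x, y) G) = equivcl G"
  by (intro equalityI equivcl_subsetI equivcl_mono) (auto intro: equivcl_incl)

lemma equivcl_invariant:
  assumes "\<And>x y. (x, y) \<in> G \<Longrightarrow> h x = h y" and "(x, y) \<in> equivcl G"
  shows "h x = h y"
proof -
  have "(x, y) \<in> (G \<union> G\<inverse>)\<^sup>*" using assms(2) by (simp add: equivcl_def)
  then show ?thesis by induction (auto dest: assms(1))
qed

lemma equivcl_Image_subset: "G \<subseteq> S \<times> S \<Longrightarrow> x \<in> S \<Longrightarrow> equivcl G `` {x} \<subseteq> S"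
  using equivcl_invariant[of G "\<lambda>z. z \<in> S"] by blast

lemma quotient_eq_image: "S // R = (\<lambda>z. R `` {z}) ` S"
  by (auto simp: quotient_def)

lemma equivcl_insert:
  fixes G :: "('b \<times> 'b) set" and x y :: 'b
  defines "U \<equiv> equivcl G `` {x, y}"
  shows "equivcl (insert (x, y) G) = equivcl G \<union> U \<times> U"
proof
  have R: "equiv UNIV (equivcl G)" by (rule equiv_equivcl)
  have U_closed: "u \<in> U \<longleftrightarrow> v \<in> U" if "(u, v) \<in> equivcl G" for u v
    using that R unfolding U_def by (blast elim: equivE dest: symD transD)
  have xy: "x \<in> U" "y \<in> U" unfolding U_def by (blast intro: equivcl_refl)+
  show "equivcl (insert (x, y) G) \<subseteq> equivcl G \<union> U \<times> U"
  proof (rule equivcl_least)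
    show "equiv UNIV (equivcl G \<union> U \<times> U)"
      using R U_closed unfolding equiv_def refl_on_def sym_def trans_def by blast
    show "insert (x, y) G \<subseteq> equivcl G \<union> U \<times> U"
      using xy by (auto intro: equivcl_incl)
  qed
  have G_sub: "equivcl G \<subseteq> equivcl (insert (x, y) G)" by (rule equivcl_mono) auto
  moreover have "(x, u) \<in> equivcl (insert (x, y) G)" if "u \<in> U" for u
  proof -
    have "(x, y) \<in> equivcl (insert (x, y) G)" by (rule equivcl_incl) simp
    then show ?thesis using that G_sub unfolding U_def by (blast intro: equivcl_trans)
  qed
  ultimately show "equivcl G \<union> U \<times> U \<subseteq> equivcl (insert (x, y) G)"
    by (blast intro: equivcl_trans equivcl_sym)
qed

lemma quotient_equivcl_insert:
  fixes G :: "('b \<times> 'b) set"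
  assumes "x \<in> S"
  defines "R \<equiv> equivcl G"
  shows "S // equivcl (insert (x, y) G) = insert (R `` {x, y}) (S // R - {R `` {x}, R `` {y}})"
proof -
  define U where "U = R `` {x, y}"
  have R: "equiv UNIV R" unfolding R_def by (rule equiv_equivcl)
  have xU: "x \<in> U" unfolding U_def R_def by (blast intro: equivcl_refl)
  have U_iff: "z \<in> U \<longleftrightarrow> R `` {z} = R `` {x} \<or> R `` {z} = R `` {y}" for z
    using eq_equiv_class_iff[OF R] unfolding U_def by blast
  have "(\<lambda>z. R `` {z}) ` (S - U) = S // R - {R `` {x}, R `` {y}}"
  proof (intro equalityI subsetI)
    fix C assume "C \<in> (\<lambda>z. R `` {z}) ` (S - U)"
    then obtain z where "z \<in> S" "z \<notin> U" "C = R `` {z}" by blast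
    then show "C \<in> S // R - {R `` {x}, R `` {y}}"
      unfolding U_iff by (simp add: quotientI)
  next
    fix C assume C: "C \<in> S // R - {R `` {x}, R `` {y}}"
    obtain z where "C = R `` {z}" "z \<in> S" using DiffD1[OF C] by (rule quotientE)
    show "C \<in> (\<lambda>z. R `` {z}) ` (S - U)"
    proof (rule image_eqI)
      show "C = R `` {z}" by fact
      show "z \<in> S - U" using C \<open>C = R `` {z}\<close> \<open>z \<in> S\<close> U_iff by simp
    qed
  qed
  moreover have "S // equivcl (insert (x, y) G) = insert U ((\<lambda>z. R `` {z}) ` (S - U))"
  proof -
    have "(U \<times> U) `` {z} = (if z \<in> U then U else {})" for z by auto
    moreover have "R `` {z} \<subseteq> U" if "z \<in> U" for z
      using that U_iff unfolding U_def by auto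
    ultimately have "equivcl (insert (x, y) G) `` {z} = (if z \<in> U then U else R `` {z})" for z
      unfolding equivcl_insert R_def[symmetric] U_def[symmetric] by auto
    then have "S // equivcl (insert (x, y) G) = (\<lambda>z. if z \<in> U then U else R `` {z}) ` S"
      by (simp add: quotient_eq_image)
    also have "\<dots> = insert U ((\<lambda>z. R `` {z}) ` (S - U))"
      using assms(1) xU by auto
    finally show ?thesis .
  qed
  ultimately show ?thesis by (simp add: U_def)
qed

lemma card_quotient_equivcl_insert:
  assumes "finite S" "x \<in> S" "y \<in> S" "(x, y) \<notin> equivcl G"
  shows "card (S // equivcl G) = card (S // equivcl (insert (x, y) G)) + 1"
proof -
  define R where "R = equivcl G"
  have R: "equiv UNIV R" unfolding R_def by (rule equiv_equivcl)
  have new: "R `` {x, y} \<notin> S // R - {R `` {x}, R `` {y}}"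
  proof
    assume U: "R `` {x, y} \<in> S // R - {R `` {x}, R `` {y}}"
    obtain z where z: "R `` {x, y} = R `` {z}" "z \<in> S" using DiffD1[OF U] by (rule quotientE)
    have "x \<in> R `` {x, y}" unfolding R_def by (blast intro: equivcl_refl)
    then have "(z, x) \<in> R" using z(1) by simp
    then have "R `` {z} = R `` {x}" by (simp add: eq_equiv_class_iff[OF R])
    with U z show False by simp
  qed
  have two: "R `` {x} \<noteq> R `` {y}"
    using assms(4) R by (simp add: R_def eq_equiv_class_iff)
  have sub: "{R `` {x}, R `` {y}} \<subseteq> S // R"
    using assms(2,3) by (auto intro: quotientI)
  have fin: "finite (S // R)"
    using assms(1) by (simp add: quotient_eq_image)
  then have "card {R `` {x}, R `` {y}} \<le> card (S // R)"
    using sub by (rule card_mono)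
  then show ?thesis
    using fin sub two new unfolding quotient_equivcl_insert[OF assms(2)] R_def[symmetric]
    by (simp add: card_Diff_subset)
qed

lemma card_quotient_eq_card_image:
  assumes "\<And>x. x \<in> S \<Longrightarrow> R `` {x} = {y \<in> S. h y = h x}"
  shows "card (S // R) = card (h ` S)"
proof -
  have "S // R = (\<lambda>x. {y \<in> S. h y = h x}) ` S"
    unfolding quotient_eq_image using assms by (rule image_cong[OF refl])
  also have "\<dots> = (\<lambda>b. {y \<in> S. h y = b}) ` h ` S"
    by (simp add: image_image)
  finally have "S // R = (\<lambda>b. {y \<in> S. h y = b}) ` h ` S" .
  moreover have "inj_on (\<lambda>b. {y \<in> S. h y = b}) (h ` S)"
  proof (rule inj_onI)
    fix b b' assume "b \<in> h ` S" "{y \<in> S. h y = b} = {y \<in> S. h y = b'}"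
    then show "b = b'" by (metis (mono_tags, lifting) image_iff mem_Collect_eq)
  qed
  ultimately show ?thesis by (simp add: card_image)
qed

lemma card_quotient_eq_sum:
  assumes "finite S" "equiv UNIV R" "\<And>x. x \<in> S \<Longrightarrow> R `` {x} \<subseteq> S"
  shows "real (card (S // R)) = (\<Sum>x\<in>S. 1 / real (card (R `` {x})))"
proof -
  have "(\<Sum>x\<in>S. 1 / real (card (R `` {x})))
      = (\<Sum>C\<in>(\<lambda>x. R `` {x}) ` S. \<Sum>x\<in>{x \<in> S. R `` {x} = C}. 1 / real (card (R `` {x})))"
    using assms(1) by (rule sum.image_gen)
  also have "\<dots> = (\<Sum>C\<in>S // R. 1)"
  proof (rule sum.cong)
    fix C assume "C \<in> S // R"
    then obtain z where z: "C = R `` {z}" "z \<in> S" by (rule quotientE)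
    have fiber: "{x \<in> S. R `` {x} = C} = C"
    proof (intro equalityI subsetI)
      fix x assume "x \<in> {x \<in> S. R `` {x} = C}"
      then show "x \<in> C" using equiv_class_self[OF assms(2)] by auto
    next
      fix x assume "x \<in> C"
      then show "x \<in> {x \<in> S. R `` {x} = C}"
        using z assms(2,3) eq_equiv_class_iff[OF assms(2)] by (auto elim: equivE dest: symD)
    qed
    have "finite C" "z \<in> C"
      using z assms(1,3) equiv_class_self[OF assms(2)] by (auto intro: finite_subset)
    then have "real (card C) \<noteq> 0" by auto
    have "R `` {x} = C" if "x \<in> C" for x
    proof -
      from that have "x \<in> {x \<in> S. R `` {x} = C}" by (simp only: fiber)
      then show ?thesis by simp
    qed
    then have "(\<Sum>x\<in>C. 1 / real (card (R `` {x}))) = (\<Sum>x\<in>C. 1 / real (card C))"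
      by (intro sum.cong) simp_all
    then show "(\<Sum>x\<in>{x \<in> S. R `` {x} = C}. 1 / real (card (R `` {x}))) = 1"
      using \<open>real (card C) \<noteq> 0\<close> by (simp only: fiber) simp
  qed (simp add: quotient_eq_image)
  also have "\<dots> = real (card (S // R))" by simp
  finally show ?thesis ..
qed

section \<open>Cycles of a permutation\<close>

definition perm_graph :: "'b set \<Rightarrow> ('b \<Rightarrow> 'b) \<Rightarrow> ('b \<times> 'b) set" where
  "perm_graph S p = (\<lambda>x. (x, p x)) ` S"

abbreviation cycle_of :: "'b set \<Rightarrow> ('b \<Rightarrow> 'b) \<Rightarrow> 'b \<Rightarrow> 'b set" where
  "cycle_of S p x \<equiv> equivcl (perm_graph S p) `` {x}"

definition num_cycles :: "'b set \<Rightarrow> ('b \<Rightarrow> 'b) \<Rightarrow> nat" where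
  "num_cycles S p = card (S // equivcl (perm_graph S p))"

lemma perm_graph_subset: "bij_betw p S S \<Longrightarrow> perm_graph S p \<subseteq> S \<times> S"
  by (auto simp: perm_graph_def bij_betw_apply)

lemma in_perm_graph: "x \<in> S \<Longrightarrow> (x, p x) \<in> perm_graph S p"
  by (simp add: perm_graph_def)

context
  fixes S :: "'b set" and p :: "'b \<Rightarrow> 'b"
  assumes fin: "finite S" and bij: "bij_betw p S S"
begin

lemma cycle_of_subset: "x \<in> S \<Longrightarrow> cycle_of S p x \<subseteq> S"
  by (rule equivcl_Image_subset[OF perm_graph_subset[OF bij]])

lemma funpow_in_cycle_of: "x \<in> S \<Longrightarrow> (p ^^ k) x \<in> cycle_of S p x"
proof (induction k)
  case (Suc k)
  then have "((p ^^ k) x, p ((p ^^ k) x)) \<in> equivcl (perm_graph S p)"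
    using cycle_of_subset by (blast intro: equivcl_incl in_perm_graph)
  with Suc show ?case by (auto intro: equivcl_trans)
qed simp

text \<open>A cycle cannot leave a subset that is closed under the bijection, because on a finite
  set such a subset is also closed under the inverse.\<close>
lemma cycle_of_subset_closed:
  assumes "T \<subseteq> S" "p ` T \<subseteq> T" "x \<in> T"
  shows "cycle_of S p x \<subseteq> T"
proof -
  have "p ` T = T"
    using assms fin bij by (meson bij_betw_imp_inj_on endo_inj_surj finite_subset inj_on_subset)
  then have "(u \<in> T) = (v \<in> T)" if "(u, v) \<in> perm_graph S p" for u v
    using that assms(1) bij_betw_imp_inj_on[OF bij]
    by (auto simp: perm_graph_def dest: inj_onD)
  then show ?thesis
    using assms(3) equivcl_invariant[of "perm_graph S p" "\<lambda>z. z \<in> T"] by blast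
qed

lemma funpow_mem: "x \<in> S \<Longrightarrow> (p ^^ k) x \<in> S"
  using bij_betw_apply[OF bij_betw_funpow[OF bij]] .

lemma cycle_of_eq_orbit: "x \<in> S \<Longrightarrow> cycle_of S p x = range (\<lambda>k. (p ^^ k) x)"
proof
  assume x: "x \<in> S"
  show "cycle_of S p x \<subseteq> range (\<lambda>k. (p ^^ k) x)"
  proof (rule cycle_of_subset_closed)
    show "range (\<lambda>k. (p ^^ k) x) \<subseteq> S"
      using funpow_mem[OF x] by (rule image_subsetI)
    show "p ` range (\<lambda>k. (p ^^ k) x) \<subseteq> range (\<lambda>k. (p ^^ k) x)"
    proof (rule image_subsetI)
      fix y assume "y \<in> range (\<lambda>k. (p ^^ k) x)"
      then obtain k where "y = (p ^^ k) x" by blast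
      then have "p y = (p ^^ Suc k) x" by simp
      then show "p y \<in> range (\<lambda>k. (p ^^ k) x)" by (rule range_eqI)
    qed
    show "x \<in> range (\<lambda>k. (p ^^ k) x)"
      by (rule range_eqI[of _ _ 0]) simp
  qed
  show "range (\<lambda>k. (p ^^ k) x) \<subseteq> cycle_of S p x"
    using funpow_in_cycle_of[OF x] by (rule image_subsetI)
qed

lemma funpow_period_exists:
  assumes "x \<in> S"
  shows "\<exists>n>0. (p ^^ n) x = x"
proof -
  have "range (\<lambda>k. (p ^^ k) x) \<subseteq> S"
    using funpow_mem[OF assms] by (rule image_subsetI)
  then have "\<not> inj (\<lambda>k. (p ^^ k) x)"
    using fin infinite_UNIV_nat by (meson finite_imageD finite_subset)
  then obtain i j where ij: "i < j" "(p ^^ i) x = (p ^^ j) x"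
    unfolding inj_def by (metis linorder_neqE_nat)
  have "(p ^^ i) ((p ^^ (j - i)) x) = (p ^^ (i + (j - i))) x"
    by (simp add: funpow_add)
  then have "(p ^^ i) ((p ^^ (j - i)) x) = (p ^^ i) x"
    using ij by simp
  moreover have "inj_on (p ^^ i) S"
    using bij_betw_funpow[OF bij] by (rule bij_betw_imp_inj_on)
  moreover have "(p ^^ (j - i)) x \<in> S"
    using assms by (rule funpow_mem)
  ultimately have "(p ^^ (j - i)) x = x"
    using assms by (meson inj_onD)
  then show ?thesis using ij by (intro exI[of _ "j - i"]) simp
qed

lemma cycle_of_period:
  assumes "x \<in> S"
  shows "0 < card (cycle_of S p x)" and "(p ^^ card (cycle_of S p x)) x = x"
    and "\<And>k. 0 < k \<Longrightarrow> k < card (cycle_of S p x) \<Longrightarrow> (p ^^ k) x \<noteq> x"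
proof -
  define n where "n = (LEAST n. 0 < n \<and> (p ^^ n) x = x)"
  have n: "0 < n" "(p ^^ n) x = x"
    using LeastI_ex[OF funpow_period_exists[OF assms]] by (simp_all add: n_def)
  have less: "(p ^^ k) x \<noteq> x" if "0 < k" "k < n" for k
    using that not_less_Least[of k "\<lambda>n. 0 < n \<and> (p ^^ n) x = x"] by (simp add: n_def)
  have "cycle_of S p x = (\<lambda>k. (p ^^ k) x) ` {0..<n}"
    unfolding cycle_of_eq_orbit[OF assms]
  proof (intro equalityI subsetI)
    fix y assume "y \<in> range (\<lambda>k. (p ^^ k) x)"
    then obtain k where "y = (p ^^ k) x" by blast
    then have "y = (p ^^ (k mod n)) x" using funpow_mod_eq[OF n(2)] by simp
    then show "y \<in> (\<lambda>k. (p ^^ k) x) ` {0..<n}" using n(1) by simp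
  qed blast
  moreover have "inj_on (\<lambda>k. (p ^^ k) x) {0..<n}"
    using n(2) less by (rule inj_on_funpow_least)
  ultimately have "card (cycle_of S p x) = n" by (simp add: card_image)
  then show "0 < card (cycle_of S p x)" "(p ^^ card (cycle_of S p x)) x = x"
    "\<And>k. 0 < k \<Longrightarrow> k < card (cycle_of S p x) \<Longrightarrow> (p ^^ k) x \<noteq> x"
    using n less by simp_all
qed

lemma card_cycle_of_le:
  assumes "x \<in> S" "0 < k" "(p ^^ k) x = x"
  shows "card (cycle_of S p x) \<le> k"
  using cycle_of_period(3)[OF assms(1) assms(2)] assms(3) by (meson not_le)

lemma inj_on_funpow_cycle_of:
  "x \<in> S \<Longrightarrow> inj_on (\<lambda>k. (p ^^ k) x) {0..<card (cycle_of S p x)}"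
  using cycle_of_period(2,3) by (rule inj_on_funpow_least)

lemma cycle_of_funpow_less:
  assumes "x \<in> S" "y \<in> cycle_of S p x"
  obtains m where "m < card (cycle_of S p x)" "y = (p ^^ m) x"
proof -
  obtain k where "y = (p ^^ k) x" using assms cycle_of_eq_orbit by blast
  then have "y = (p ^^ (k mod card (cycle_of S p x))) x"
    using funpow_mod_eq[OF cycle_of_period(2)[OF assms(1)]] by simp
  moreover have "k mod card (cycle_of S p x) < card (cycle_of S p x)"
    using cycle_of_period(1)[OF assms(1)] by simp
  ultimately show ?thesis by (rule that[rotated])
qed

lemma num_cycles_eq_sum: "real (num_cycles S p) = (\<Sum>x\<in>S. 1 / real (card (cycle_of S p x)))"
  unfolding num_cycles_def using fin equiv_equivcl cycle_of_subset by (rule card_quotient_eq_sum)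

end

section \<open>Multiplying by a transposition\<close>

lemma bij_betw_comp_transpose:
  "bij_betw p S S \<Longrightarrow> x \<in> S \<Longrightarrow> y \<in> S \<Longrightarrow> bij_betw (p \<circ> transpose x y) S S"
  by (rule bij_betw_trans[OF bij_betw_transpose_iff]) simp_all

lemma perm_graph_comp_transpose_subset:
  assumes "x \<in> S" "y \<in> S"
  shows "perm_graph S (p \<circ> transpose x y) \<subseteq> equivcl (insert (x, y) (perm_graph S p))"
proof
  let ?H = "insert (x, y) (perm_graph S p)"
  fix e assume "e \<in> perm_graph S (p \<circ> transpose x y)"
  then obtain z where z: "z \<in> S" "e = (z, p (transpose x y z))"
    by (auto simp: perm_graph_def)
  have step: "(u, p u) \<in> equivcl ?H" if "u \<in> S" for u
    using that by (auto intro: equivcl_incl in_perm_graph)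
  have xy: "(x, y) \<in> equivcl ?H" by (rule equivcl_incl) simp
  consider "z = x" | "z = y" | "z \<noteq> x" "z \<noteq> y" by blast
  then show "e \<in> equivcl ?H"
  proof cases
    case 1
    then show ?thesis using z equivcl_trans[OF xy step[OF assms(2)]] by simp
  next
    case 2
    then show ?thesis using z equivcl_trans[OF equivcl_sym[OF xy] step[OF assms(1)]] by simp
  next
    case 3
    then show ?thesis using z step by simp
  qed
qed

lemma equivcl_insert_perm_graph_comp_transpose:
  assumes "x \<in> S" "y \<in> S"
  shows "equivcl (insert (x, y) (perm_graph S (p \<circ> transpose x y)))
       = equivcl (insert (x, y) (perm_graph S p))"
proof -
  have "p \<circ> transpose x y \<circ> transpose x y = p" by (simp add: comp_assoc)
  then have "perm_graph S p \<subseteq> equivcl (insert (x, y) (perm_graph S (p \<circ> transpose x y)))"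
    using perm_graph_comp_transpose_subset[OF assms, of "p \<circ> transpose x y"] by simp
  moreover have "perm_graph S (p \<circ> transpose x y) \<subseteq> equivcl (insert (x, y) (perm_graph S p))"
    using assms by (rule perm_graph_comp_transpose_subset)
  ultimately show ?thesis
    by (intro equalityI equivcl_subsetI) (auto intro: equivcl_incl)
qed

text \<open>If y lies outside the cycle of x, then p \<circ> (x y) sends x to p y and from there follows
  the old cycle of y back to y.\<close>
lemma cycle_of_comp_transpose_join:
  assumes fin: "finite S" and bij: "bij_betw p S S"
    and "x \<in> S" "y \<in> S" "y \<notin> cycle_of S p x"
  shows "y \<in> cycle_of S (p \<circ> transpose x y) x"
proof -
  define q where "q = p \<circ> transpose x y"
  define n where "n = card (cycle_of S p y)"
  have n: "0 < n" "(p ^^ n) y = y" "\<And>k. 0 < k \<Longrightarrow> k < n \<Longrightarrow> (p ^^ k) y \<noteq> y"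
    using cycle_of_period[OF fin bij \<open>y \<in> S\<close>] by (simp_all add: n_def)
  have not_x: "(p ^^ k) y \<noteq> x" for k
  proof
    assume "(p ^^ k) y = x"
    then have "(y, x) \<in> equivcl (perm_graph S p)"
      using funpow_in_cycle_of[OF fin bij \<open>y \<in> S\<close>, of k] by simp
    then show False using assms(5) equivcl_sym by fastforce
  qed
  have walk: "(q ^^ j) (p y) = (p ^^ Suc j) y" if "j < n" for j
    using that
  proof (induction j)
    case (Suc j)
    have "(p ^^ Suc j) y \<noteq> y" using n(3)[of "Suc j"] Suc.prems by simp
    then have "q ((p ^^ Suc j) y) = p ((p ^^ Suc j) y)" using not_x[of "Suc j"] by (simp add: q_def)
    then show ?case using Suc by simp
  qed simp
  obtain m where m: "n = Suc m" using n(1) gr0_conv_Suc by blast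
  have "(q ^^ n) x = (q ^^ m) (q x)" by (simp only: m funpow_Suc_right comp_apply)
  also have "q x = p y" by (simp add: q_def)
  also have "(q ^^ m) (p y) = y" using walk[of m] m n(2) by simp
  finally have "(q ^^ n) x = y" .
  moreover have "bij_betw q S S" unfolding q_def using bij assms(3,4) by (rule bij_betw_comp_transpose)
  ultimately show ?thesis
    using funpow_in_cycle_of[OF fin _ \<open>x \<in> S\<close>, of q n] by (simp add: q_def)
qed

text \<open>For y = p^m x with 0 < m < n on the cycle of x of length n, the map p \<circ> (x y) sends
  x to p^(m+1) x and agrees with p on p^(m+1) x, ..., p^(n-1) x, so it closes up this
  segment of the cycle of x, which misses y.\<close>
lemma comp_transpose_segment_closed:
  assumes fin: "finite S" and bij: "bij_betw p S S"
    and x: "x \<in> S" and m: "0 < m" "m < card (cycle_of S p x)"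
  defines "T \<equiv> (\<lambda>i. (p ^^ i) x) ` ({0} \<union> {m<..<card (cycle_of S p x)})"
  shows "(p \<circ> transpose x ((p ^^ m) x)) ` T \<subseteq> T"
proof (rule image_subsetI)
  define n where "n = card (cycle_of S p x)"
  have n: "(p ^^ n) x = x" "\<And>k. 0 < k \<Longrightarrow> k < n \<Longrightarrow> (p ^^ k) x \<noteq> x"
    using cycle_of_period[OF fin bij x] by (simp_all add: n_def)
  have dist: "inj_on (\<lambda>k. (p ^^ k) x) {0..<n}"
    unfolding n_def using fin bij x by (rule inj_on_funpow_cycle_of)
  have succ_in_T: "(p ^^ Suc i) x \<in> T" if "m \<le> i" "i < n" for i
  proof (cases "Suc i = n")
    case True
    then show ?thesis using n(1) by (auto simp: T_def intro: image_eqI[of _ _ 0])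
  next
    case False
    then have "Suc i \<in> {0} \<union> {m<..<n}" using that by simp
    then show ?thesis unfolding T_def n_def by (rule rev_image_eqI) simp
  qed
  fix z assume "z \<in> T"
  then obtain i where "z = (p ^^ i) x" "i \<in> {0} \<union> {m<..<n}"
    unfolding T_def n_def by (rule imageE)
  then have i: "z = (p ^^ i) x" "i = 0 \<or> m < i \<and> i < n" by auto
  show "(p \<circ> transpose x ((p ^^ m) x)) z \<in> T"
  proof (cases "i = 0")
    case True
    then show ?thesis using i succ_in_T[of m] m by (simp add: n_def)
  next
    case False
    then have "z \<noteq> x" using i n(2) by auto
    moreover have "z \<noteq> (p ^^ m) x" using False i m dist by (auto simp: n_def dest: inj_onD)
    ultimately show ?thesis using i succ_in_T[of i] False by simp
  qed
qed

lemma cycle_of_comp_transpose_cut: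
  assumes fin: "finite S" and bij: "bij_betw p S S"
    and "x \<in> S" "x \<noteq> y" "y \<in> cycle_of S p x"
  shows "y \<notin> cycle_of S (p \<circ> transpose x y) x"
proof -
  define n where "n = card (cycle_of S p x)"
  obtain m where y: "m < n" "y = (p ^^ m) x"
    using fin bij \<open>x \<in> S\<close> assms(5) unfolding n_def by (rule cycle_of_funpow_less)
  have "m \<noteq> 0" using y \<open>x \<noteq> y\<close> by (cases m) auto
  define T where "T = (\<lambda>i. (p ^^ i) x) ` ({0} \<union> {m<..<n})"
  have "cycle_of S (p \<circ> transpose x y) x \<subseteq> T"
  proof (rule cycle_of_subset_closed[OF fin])
    show "bij_betw (p \<circ> transpose x y) S S"
      using bij assms(3) cycle_of_subset[OF fin bij] assms(5) by (blast intro: bij_betw_comp_transpose)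
    show "T \<subseteq> S" unfolding T_def using funpow_mem[OF fin bij \<open>x \<in> S\<close>] by blast
    show "x \<in> T" unfolding T_def by (auto intro: image_eqI[of _ _ 0])
    show "(p \<circ> transpose x y) ` T \<subseteq> T"
      unfolding T_def n_def y(2) using fin bij \<open>x \<in> S\<close> \<open>m \<noteq> 0\<close> y(1)[unfolded n_def]
      by (intro comp_transpose_segment_closed) simp_all
  qed
  moreover have "y \<notin> T"
    using y \<open>m \<noteq> 0\<close> \<open>x \<noteq> y\<close> inj_on_funpow_cycle_of[OF fin bij \<open>x \<in> S\<close>]
    by (auto simp: T_def n_def dest: inj_onD)
  ultimately show ?thesis by blast
qed

lemma num_cycles_comp_transpose_join:
  assumes "finite S" "bij_betw p S S" "x \<in> S" "y \<in> S" "y \<notin> cycle_of S p x"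
  shows "num_cycles S p = num_cycles S (p \<circ> transpose x y) + 1"
proof -
  have "(x, y) \<in> equivcl (perm_graph S (p \<circ> transpose x y))"
    using cycle_of_comp_transpose_join[OF assms] by simp
  then have "equivcl (perm_graph S (p \<circ> transpose x y)) = equivcl (insert (x, y) (perm_graph S p))"
    using equivcl_insert_perm_graph_comp_transpose[OF assms(3,4)] equivcl_insert_absorb by metis
  moreover have "num_cycles S p = card (S // equivcl (insert (x, y) (perm_graph S p))) + 1"
    unfolding num_cycles_def using assms(1,3,4) by (rule card_quotient_equivcl_insert) (use assms(5) in simp)
  ultimately show ?thesis by (simp add: num_cycles_def)
qed

lemma num_cycles_comp_transpose_cut:
  assumes "finite S" "bij_betw p S S" "x \<in> S" "x \<noteq> y" "y \<in> cycle_of S p x"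
  shows "num_cycles S (p \<circ> transpose x y) = num_cycles S p + 1"
proof -
  have "y \<in> S" using cycle_of_subset[OF assms(1,2,3)] assms(5) by blast
  have "num_cycles S (p \<circ> transpose x y) = num_cycles S (p \<circ> transpose x y \<circ> transpose x y) + 1"
  proof (rule num_cycles_comp_transpose_join)
    show "bij_betw (p \<circ> transpose x y) S S"
      using assms(2,3) \<open>y \<in> S\<close> by (rule bij_betw_comp_transpose)
    show "y \<notin> cycle_of S (p \<circ> transpose x y) x"
      using assms by (rule cycle_of_comp_transpose_cut)
  qed (use assms \<open>y \<in> S\<close> in simp_all)
  then show ?thesis by (simp add: comp_assoc)
qed

lemma num_cycles_comp_transpose_le:
  assumes "finite S" "bij_betw p S S" "x \<in> S" "y \<in> S"
  shows "num_cycles S (p \<circ> transpose x y) \<le> num_cycles S p + 1"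
proof (cases "y \<in> cycle_of S p x")
  case True
  then show ?thesis
    using num_cycles_comp_transpose_cut[OF assms(1-3)] by (cases "x = y") simp_all
next
  case False
  then show ?thesis using num_cycles_comp_transpose_join[OF assms] by simp
qed

section \<open>The genus bound for hypermaps\<close>

lemma perm_graph_comp_subset:
  assumes "bij_betw b S S"
  shows "perm_graph S (a \<circ> b) \<subseteq> equivcl (perm_graph S a \<union> perm_graph S b)"
proof
  fix e assume "e \<in> perm_graph S (a \<circ> b)"
  then obtain z where z: "z \<in> S" "e = (z, a (b z))" by (auto simp: perm_graph_def)
  have "(z, b z) \<in> equivcl (perm_graph S a \<union> perm_graph S b)"
    using z(1) by (auto intro: equivcl_incl in_perm_graph)
  moreover have "(b z, a (b z)) \<in> equivcl (perm_graph S a \<union> perm_graph S b)"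
    using bij_betw_apply[OF assms z(1)] by (auto intro: equivcl_incl in_perm_graph)
  ultimately show "e \<in> equivcl (perm_graph S a \<union> perm_graph S b)"
    using z(2) by (blast intro: equivcl_trans)
qed

lemma equivcl_Un_equivcl: "equivcl (K \<union> equivcl H) = equivcl (K \<union> H)"
proof
  show "equivcl (K \<union> equivcl H) \<subseteq> equivcl (K \<union> H)"
    by (intro equivcl_subsetI Un_least) (auto intro: equivcl_incl equivcl_mono[THEN subsetD, rotated])
  show "equivcl (K \<union> H) \<subseteq> equivcl (K \<union> equivcl H)"
    by (intro equivcl_mono) (auto intro: equivcl_incl)
qed

lemma num_cycles_id_on:
  assumes "\<And>z. z \<in> S \<Longrightarrow> b z = z"
  shows "num_cycles S b = card S"
proof -
  have "equivcl (perm_graph S b) \<subseteq> Id"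
    using assms by (intro equivcl_least) (auto simp: perm_graph_def equiv_def refl_on_def sym_def trans_def)
  then have "equivcl (perm_graph S b) `` {x} = {y \<in> S. id y = id x}" if "x \<in> S" for x
    using that by auto
  then have "num_cycles S b = card (id ` S)"
    unfolding num_cycles_def by (rule card_quotient_eq_card_image)
  then show ?thesis by simp
qed

lemma card_support_comp_transpose_less:
  assumes "finite S" "bij_betw b S S" "x \<in> S" "b x \<noteq> x"
  shows "card {z \<in> S. (b \<circ> transpose x (b x)) z \<noteq> z} < card {z \<in> S. b z \<noteq> z}"
proof -
  define y where "y = b x"
  have "y \<in> S" using assms(2,3) by (simp add: y_def bij_betw_apply)
  have "b y \<noteq> y"
  proof
    assume "b y = y"
    then have "b y = b x" by (simp add: y_def)
    with inj_onD[OF bij_betw_imp_inj_on[OF assms(2)]] assms(3,4) \<open>y \<in> S\<close> show False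
      by (auto simp: y_def)
  qed
  have "{z \<in> S. (b \<circ> transpose x y) z \<noteq> z} \<subseteq> {z \<in> S. b z \<noteq> z} - {y}"
  proof (intro subsetI)
    fix z assume z: "z \<in> {z \<in> S. (b \<circ> transpose x y) z \<noteq> z}"
    then have "z \<noteq> y" by (auto simp: y_def)
    moreover have "b z \<noteq> z" using z assms(4) \<open>z \<noteq> y\<close> by (cases "z = x") auto
    ultimately show "z \<in> {z \<in> S. b z \<noteq> z} - {y}" using z by simp
  qed
  then have "card {z \<in> S. (b \<circ> transpose x y) z \<noteq> z} \<le> card ({z \<in> S. b z \<noteq> z} - {y})"
    using assms(1) by (intro card_mono) simp_all
  also have "\<dots> < card {z \<in> S. b z \<noteq> z}"
    using assms(1) \<open>y \<in> S\<close> \<open>b y \<noteq> y\<close> by (intro card_Diff1_less) simp_all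
  finally show ?thesis by (simp add: y_def)
qed

lemma equivcl_insert_Un_perm_graph_comp_transpose:
  assumes "x \<in> S" "y \<in> S"
  shows "equivcl (insert (x, y) (K \<union> perm_graph S (b \<circ> transpose x y)))
       = equivcl (insert (x, y) (K \<union> perm_graph S b))"
proof -
  have "equivcl (insert (x, y) (K \<union> perm_graph S (b \<circ> transpose x y)))
      = equivcl (K \<union> equivcl (insert (x, y) (perm_graph S (b \<circ> transpose x y))))"
    unfolding equivcl_Un_equivcl by simp
  also have "\<dots> = equivcl (K \<union> equivcl (insert (x, y) (perm_graph S b)))"
    unfolding equivcl_insert_perm_graph_comp_transpose[OF assms] ..
  also have "\<dots> = equivcl (insert (x, y) (K \<union> perm_graph S b))"
    unfolding equivcl_Un_equivcl by simp
  finally show ?thesis .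
qed

text \<open>b' = b \<circ> (x b(x)) fixes b(x) and has one cycle more than b. If x and b(x) lie in one
  orbit of the group generated by a and b', then the orbits are those of a and b, and a \<circ> b
  has at most one cycle more than a \<circ> b'. Otherwise two orbits merge, and x, b(x) lie on
  different cycles of a \<circ> b', so a \<circ> b has one cycle less.\<close>
lemma hypermap_bound_transpose_step:
  assumes fin: "finite S" and bij: "bij_betw a S S" "bij_betw b S S"
    and x: "x \<in> S" "b x \<noteq> x"
  defines "b' \<equiv> b \<circ> transpose x (b x)"
  shows "num_cycles S b + num_cycles S (a \<circ> b)
           + 2 * card (S // equivcl (perm_graph S a \<union> perm_graph S b'))
         \<le> num_cycles S b' + num_cycles S (a \<circ> b')
           + 2 * card (S // equivcl (perm_graph S a \<union> perm_graph S b))"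
proof -
  define y where "y = b x"
  have y: "y \<in> S" "x \<noteq> y" using x bij(2) by (auto simp: y_def bij_betw_apply)
  have b'_def': "b' = b \<circ> transpose x y" by (simp add: b'_def y_def)
  have bij': "bij_betw b' S S" unfolding b'_def' using bij(2) x(1) y(1) by (rule bij_betw_comp_transpose)
  have b: "b = b' \<circ> transpose x y" by (simp add: b'_def' comp_assoc)
  have "b' y = y" by (simp add: b'_def' y_def)
  then have "x \<notin> cycle_of S b' y"
    using cycle_of_subset_closed[OF fin bij', of "{y}"] y by auto
  then have "y \<notin> cycle_of S b' x" by (auto intro: equivcl_sym)
  then have cycles_b: "num_cycles S b' = num_cycles S b + 1"
    using num_cycles_comp_transpose_join[OF fin bij' x(1) y(1)] b by simp
  define G where "G = perm_graph S a \<union> perm_graph S b"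
  define G' where "G' = perm_graph S a \<union> perm_graph S b'"
  have "equivcl (insert (x, y) G') = equivcl (insert (x, y) G)"
    unfolding G_def G'_def b'_def' using x(1) y(1) by (rule equivcl_insert_Un_perm_graph_comp_transpose)
  also have "\<dots> = equivcl G"
    by (rule equivcl_insert_absorb) (auto simp: G_def y_def x intro!: equivcl_incl in_perm_graph)
  finally have orbits: "equivcl (insert (x, y) G') = equivcl G" .
  have ab: "a \<circ> b = (a \<circ> b') \<circ> transpose x y" by (simp add: b comp_assoc)
  have bij_ab': "bij_betw (a \<circ> b') S S" using bij' bij(1) by (rule bij_betw_trans)
  show ?thesis
  proof (cases "(x, y) \<in> equivcl G'")
    case True
    then have "card (S // equivcl G') = card (S // equivcl G)"
      using equivcl_insert_absorb[OF True] orbits by simp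
    moreover have "num_cycles S (a \<circ> b) \<le> num_cycles S (a \<circ> b') + 1"
      unfolding ab using fin bij_ab' x(1) y(1) by (rule num_cycles_comp_transpose_le)
    ultimately show ?thesis using cycles_b by (simp add: G_def G'_def)
  next
    case False
    have "card (S // equivcl G') = card (S // equivcl G) + 1"
      using card_quotient_equivcl_insert[OF fin x(1) y(1) False] unfolding orbits .
    moreover have "equivcl (perm_graph S (a \<circ> b')) \<subseteq> equivcl G'"
      unfolding G'_def using perm_graph_comp_subset[OF bij'] by (rule equivcl_subsetI)
    then have "y \<notin> cycle_of S (a \<circ> b') x" using False by blast
    then have "num_cycles S (a \<circ> b') = num_cycles S (a \<circ> b) + 1"
      unfolding ab by (rule num_cycles_comp_transpose_join[OF fin bij_ab' x(1) y(1)])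
    ultimately show ?thesis using cycles_b by (simp add: G_def G'_def)
  qed
qed

text \<open>Nonnegativity of the genus of the hypermap (a, b): one sphere per orbit of the group
  generated by a and b.\<close>
theorem num_cycles_hypermap_bound:
  assumes "finite S" "bij_betw a S S" "bij_betw b S S"
  shows "num_cycles S a + num_cycles S b + num_cycles S (a \<circ> b)
         \<le> card S + 2 * card (S // equivcl (perm_graph S a \<union> perm_graph S b))"
  using assms(3)
proof (induction "card {z \<in> S. b z \<noteq> z}" arbitrary: b rule: less_induct)
  case less
  show ?case
  proof (cases "\<forall>z\<in>S. b z = z")
    case True
    have "perm_graph S (a \<circ> b) = perm_graph S a" using True by (simp add: perm_graph_def)
    moreover have "equivcl (perm_graph S a \<union> perm_graph S b) = equivcl (perm_graph S a)"
      using True by (intro equalityI equivcl_subsetI equivcl_mono)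
        (auto intro: equivcl_incl simp: perm_graph_def)
    ultimately show ?thesis
      using num_cycles_id_on[of S b] True by (simp add: num_cycles_def)
  next
    case False
    then obtain x where x: "x \<in> S" "b x \<noteq> x" by blast
    let ?b' = "b \<circ> transpose x (b x)"
    have "bij_betw ?b' S S"
      using less.prems x(1) bij_betw_apply[OF less.prems x(1)] by (rule bij_betw_comp_transpose)
    moreover have "card {z \<in> S. ?b' z \<noteq> z} < card {z \<in> S. b z \<noteq> z}"
      using assms(1) less.prems x by (rule card_support_comp_transpose_less)
    ultimately have "num_cycles S a + num_cycles S ?b' + num_cycles S (a \<circ> ?b')
        \<le> card S + 2 * card (S // equivcl (perm_graph S a \<union> perm_graph S ?b'))"
      using less.hyps by blast
    then show ?thesis
      using hypermap_bound_transpose_step[OF assms(1,2) less.prems x] by linarith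
  qed
qed

lemma funpow_map_prod:
  fixes f :: "'a \<Rightarrow> 'a" and g :: "'b \<Rightarrow> 'b"
  shows "map_prod f g ^^ n = map_prod (f ^^ n) (g ^^ n)"
  by (induction n) (auto simp: fun_eq_iff)

text \<open>When g returns to the identity after one turn around each cycle of f, every lifted
  cycle is at most as long as the cycle below it.\<close>
lemma num_cycles_map_prod_ge:
  assumes fin: "finite S" "finite I" and bij: "bij_betw f S S" "bij_betw g I I"
    and closes: "\<And>d i. d \<in> S \<Longrightarrow> i \<in> I \<Longrightarrow> (g ^^ card (cycle_of S f d)) i = i"
  shows "card I * num_cycles S f \<le> num_cycles (S \<times> I) (map_prod f g)"
proof -
  let ?F = "map_prod f g"
  have finF: "finite (S \<times> I)" using fin by simp
  have bijF: "bij_betw ?F (S \<times> I) (S \<times> I)" using bij by (rule bij_betw_map_prod)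
  have shorter: "1 / real (card (cycle_of S f d)) \<le> 1 / real (card (cycle_of (S \<times> I) ?F (d, i)))"
    if "d \<in> S" "i \<in> I" for d i
  proof -
    have "(?F ^^ card (cycle_of S f d)) (d, i) = (d, i)"
      using cycle_of_period(2)[OF fin(1) bij(1) that(1)] closes[OF that] by (simp add: funpow_map_prod)
    then have "card (cycle_of (S \<times> I) ?F (d, i)) \<le> card (cycle_of S f d)"
      using card_cycle_of_le[OF finF bijF] cycle_of_period(1)[OF fin(1) bij(1)] that by simp
    moreover have "0 < card (cycle_of (S \<times> I) ?F (d, i))"
      using cycle_of_period(1)[OF finF bijF] that by simp
    ultimately show ?thesis by (simp add: frac_le)
  qed
  have "real (card I * num_cycles S f) = (\<Sum>d\<in>S. \<Sum>i\<in>I. 1 / real (card (cycle_of S f d)))"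
    using num_cycles_eq_sum[OF fin(1) bij(1)] by (simp add: sum_distrib_left)
  also have "\<dots> = (\<Sum>(d, i)\<in>S \<times> I. 1 / real (card (cycle_of S f d)))"
    by (rule sum.cartesian_product)
  also have "\<dots> \<le> (\<Sum>(d, i)\<in>S \<times> I. 1 / real (card (cycle_of (S \<times> I) ?F (d, i))))"
    using shorter by (intro sum_mono) auto
  also have "\<dots> = real (num_cycles (S \<times> I) ?F)"
    using num_cycles_eq_sum[OF finF bijF] by (simp add: case_prod_beta')
  finally show ?thesis by linarith
qed

definition dart_rot :: "('a \<Rightarrow> 'a \<Rightarrow> 'a) \<Rightarrow> 'a \<times> 'a \<Rightarrow> 'a \<times> 'a" where
  "dart_rot rot d = (fst d, rot (fst d) (snd d))"

lemma face_step_eq: "face_step rot = dart_rot rot \<circ> prod.swap"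
  by (simp add: fun_eq_iff face_step_def dart_rot_def)

lemma funpow_dart_rot: "(dart_rot rot ^^ k) (p, u) = (p, (rot p ^^ k) u)"
  by (induction k) (simp_all add: dart_rot_def)

lemma in_darts_iff: "(u, v) \<in> darts E \<longleftrightarrow> v \<in> nbrs E u"
  by (simp add: darts_def nbrs_def)

locale rotation_graph =
  fixes V :: "'a set" and E :: "'a set set" and rot :: "'a \<Rightarrow> 'a \<Rightarrow> 'a"
  assumes simple: "simple_graph V E"
    and rotation: "rotation_system V E rot"
begin

lemma finite_V: "finite V"
  using simple by (simp add: simple_graph_def)

lemma edgeE:
  assumes "e \<in> E"
  obtains u v where "u \<noteq> v" "u \<in> V" "v \<in> V" "e = {u, v}"
  using simple assms by (auto simp: simple_graph_def)

lemma dart_endpoints: "(u, v) \<in> darts E \<Longrightarrow> u \<in> V \<and> v \<in> V \<and> u \<noteq> v"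
  by (auto simp: darts_def doubleton_eq_iff elim!: edgeE)

lemma darts_eq_Sigma: "darts E = Sigma V (nbrs E)"
  using dart_endpoints by (auto simp: in_darts_iff)

lemma finite_darts: "finite (darts E)"
proof -
  have "darts E \<subseteq> V \<times> V" using dart_endpoints by auto
  then show ?thesis using finite_V by (auto intro: finite_subset)
qed

lemma rot_bij: "p \<in> V \<Longrightarrow> bij_betw (rot p) (nbrs E p) (nbrs E p)"
  using rotation by (simp add: rotation_system_def)

lemma rot_transitive: "p \<in> V \<Longrightarrow> u \<in> nbrs E p \<Longrightarrow> w \<in> nbrs E p \<Longrightarrow> \<exists>k. (rot p ^^ k) u = w"
  using rotation by (simp add: rotation_system_def)

lemma swap_in_darts_iff [simp]: "(v, u) \<in> darts E \<longleftrightarrow> (u, v) \<in> darts E"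
  by (simp add: darts_def insert_commute)

lemma swap_in_darts: "d \<in> darts E \<Longrightarrow> prod.swap d \<in> darts E"
  by (cases d) simp

lemma dart_rot_in_darts: "d \<in> darts E \<Longrightarrow> dart_rot rot d \<in> darts E"
  by (cases d) (auto simp: darts_eq_Sigma dart_rot_def intro: bij_betw_apply[OF rot_bij])

lemma bij_swap_darts: "bij_betw prod.swap (darts E) (darts E)"
  by (rule bij_betw_byWitness[where f' = prod.swap]) auto

lemma bij_dart_rot: "bij_betw (dart_rot rot) (darts E) (darts E)"
proof -
  have "inj_on (dart_rot rot) (darts E)"
  proof (rule inj_onI)
    fix d d' assume "d \<in> darts E" "d' \<in> darts E" "dart_rot rot d = dart_rot rot d'"
    then show "d = d'"
      by (cases d, cases d') (auto simp: darts_eq_Sigma dart_rot_def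
          dest: inj_onD[OF bij_betw_imp_inj_on[OF rot_bij]])
  qed
  moreover have "dart_rot rot ` darts E = darts E"
    using finite_darts calculation dart_rot_in_darts by (intro endo_inj_surj) auto
  ultimately show ?thesis by (simp add: bij_betw_def)
qed

lemma bij_face_step: "bij_betw (face_step rot) (darts E) (darts E)"
  unfolding face_step_eq using bij_swap_darts bij_dart_rot by (rule bij_betw_trans)

lemma cycle_of_dart_rot:
  assumes "d \<in> darts E"
  shows "cycle_of (darts E) (dart_rot rot) d = {d' \<in> darts E. fst d' = fst d}"
proof (intro equalityI subsetI)
  fix d' assume d': "d' \<in> cycle_of (darts E) (dart_rot rot) d"
  have "fst d = fst d'"
  proof (rule equivcl_invariant[where h = fst])
    show "(d, d') \<in> equivcl (perm_graph (darts E) (dart_rot rot))" using d' by simp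
  qed (auto simp: perm_graph_def dart_rot_def)
  then show "d' \<in> {d' \<in> darts E. fst d' = fst d}"
    using d' cycle_of_subset[OF finite_darts bij_dart_rot assms] by auto
next
  fix d' assume d': "d' \<in> {d' \<in> darts E. fst d' = fst d}"
  obtain p u w where pu: "d = (p, u)" "d' = (p, w)" using d' by (cases d, cases d') auto
  have "p \<in> V" "u \<in> nbrs E p" "w \<in> nbrs E p"
    using assms d' pu by (auto simp: darts_eq_Sigma)
  then obtain k where "(rot p ^^ k) u = w"
    using rot_transitive by blast
  then have "d' = (dart_rot rot ^^ k) d" by (simp add: pu funpow_dart_rot)
  then show "d' \<in> cycle_of (darts E) (dart_rot rot) d"
    using funpow_in_cycle_of[OF finite_darts bij_dart_rot assms] by simp
qed

lemma cycle_of_swap: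
  assumes "d \<in> darts E"
  shows "cycle_of (darts E) prod.swap d = {d' \<in> darts E. {fst d', snd d'} = {fst d, snd d}}"
proof (intro equalityI subsetI)
  fix d' assume d': "d' \<in> cycle_of (darts E) prod.swap d"
  have "{fst d, snd d} = {fst d', snd d'}"
  proof (rule equivcl_invariant[where h = "\<lambda>z. {fst z, snd z}"])
    show "(d, d') \<in> equivcl (perm_graph (darts E) prod.swap)" using d' by simp
  qed (auto simp: perm_graph_def)
  then show "d' \<in> {d' \<in> darts E. {fst d', snd d'} = {fst d, snd d}}"
    using d' cycle_of_subset[OF finite_darts bij_swap_darts assms] by auto
next
  fix d' assume "d' \<in> {d' \<in> darts E. {fst d', snd d'} = {fst d, snd d}}"
  then have "d' = (prod.swap ^^ 0) d \<or> d' = (prod.swap ^^ 1) d"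
    by (cases d, cases d') (auto simp: doubleton_eq_iff)
  then show "d' \<in> cycle_of (darts E) prod.swap d"
    using funpow_in_cycle_of[OF finite_darts bij_swap_darts assms] by blast
qed

lemma cycle_of_face_step:
  assumes "d \<in> darts E"
  shows "cycle_of (darts E) (face_step rot) d = face_orbit rot d"
  unfolding cycle_of_eq_orbit[OF finite_darts bij_face_step assms] face_orbit_def by auto

lemma num_cycles_dart_rot:
  assumes "\<And>v. v \<in> V \<Longrightarrow> nbrs E v \<noteq> {}"
  shows "num_cycles (darts E) (dart_rot rot) = card V"
proof -
  have "num_cycles (darts E) (dart_rot rot) = card (fst ` darts E)"
    unfolding num_cycles_def using cycle_of_dart_rot by (rule card_quotient_eq_card_image)
  also have "fst ` darts E = V"
    using assms unfolding darts_eq_Sigma by force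
  finally show ?thesis .
qed

lemma num_cycles_swap: "num_cycles (darts E) prod.swap = card E"
proof -
  have "num_cycles (darts E) prod.swap = card ((\<lambda>d. {fst d, snd d}) ` darts E)"
    unfolding num_cycles_def using cycle_of_swap by (rule card_quotient_eq_card_image)
  also have "(\<lambda>d. {fst d, snd d}) ` darts E = E"
  proof (intro equalityI subsetI)
    fix e assume "e \<in> (\<lambda>d. {fst d, snd d}) ` darts E"
    then show "e \<in> E" by (auto simp: darts_def)
  next
    fix e assume "e \<in> E"
    then obtain u v where "e = {u, v}" by (rule edgeE)
    moreover have "(u, v) \<in> darts E" using \<open>e \<in> E\<close> calculation by (simp add: darts_def)
    ultimately show "e \<in> (\<lambda>d. {fst d, snd d}) ` darts E" by force
  qed
  finally show ?thesis .
qed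

lemma num_cycles_face_step: "num_cycles (darts E) (face_step rot) = card (faces E rot)"
proof -
  have "darts E // equivcl (perm_graph (darts E) (face_step rot)) = faces E rot"
    unfolding quotient_eq_image faces_def using cycle_of_face_step by (rule image_cong[OF refl])
  then show ?thesis by (simp add: num_cycles_def)
qed

lemma card_darts: "card (darts E) = 2 * card E"
proof -
  have "card (cycle_of (darts E) prod.swap d) = 2" if "d \<in> darts E" for d
  proof -
    have "{d' \<in> darts E. {fst d', snd d'} = {fst d, snd d}} = {d, prod.swap d}"
      using that swap_in_darts[OF that] by (cases d) (auto simp: doubleton_eq_iff)
    moreover have "d \<noteq> prod.swap d" using that dart_endpoints by (cases d) auto
    ultimately show ?thesis using cycle_of_swap[OF that] by simp
  qed
  then have "real (card E) = (\<Sum>d\<in>darts E. 1 / 2)"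
    using num_cycles_eq_sum[OF finite_darts bij_swap_darts] num_cycles_swap by simp
  then show ?thesis by simp
qed

lemma edge_numbering_of_dart_labelling:
  assumes "\<forall>d\<in>darts E. l d < 3 \<and> l (dart_rot rot d) = Suc (l d) mod 3 \<and> l (prod.swap d) = l d"
  shows "\<exists>\<nu> :: 'a set \<Rightarrow> nat. (\<forall>e\<in>E. \<nu> e \<in> {1, 2, 3}) \<and>
           (\<forall>p\<in>V. \<forall>u\<in>nbrs E p. \<nu> {p, rot p u} = \<nu> {p, u} mod 3 + 1)"
proof -
  define \<nu> where "\<nu> e = Suc (l (SOME d. d \<in> darts E \<and> {fst d, snd d} = e))" for e
  have \<nu>: "\<nu> {p, u} = Suc (l (p, u))" if "(p, u) \<in> darts E" for p u
  proof -
    let ?d = "SOME d. d \<in> darts E \<and> {fst d, snd d} = {p, u}"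
    have "?d \<in> darts E \<and> {fst ?d, snd ?d} = {p, u}"
      by (rule someI[of _ "(p, u)"]) (simp add: that)
    then have "?d = (p, u) \<or> ?d = prod.swap (p, u)"
      by (cases ?d) (auto simp: doubleton_eq_iff)
    then show ?thesis using assms that by (auto simp: \<nu>_def)
  qed
  show ?thesis
  proof (intro exI conjI ballI)
    fix e assume "e \<in> E"
    then obtain u v where "e = {u, v}" by (rule edgeE)
    moreover have "(u, v) \<in> darts E" using \<open>e \<in> E\<close> calculation by (simp add: darts_def)
    ultimately show "\<nu> e \<in> {1, 2, 3}" using assms \<nu> by fastforce
  next
    fix p u assume "p \<in> V" "u \<in> nbrs E p"
    then have pu: "(p, u) \<in> darts E" by (simp add: darts_eq_Sigma)
    then have "(p, rot p u) \<in> darts E" using dart_rot_in_darts by (fastforce simp: dart_rot_def)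
    then show "\<nu> {p, rot p u} = \<nu> {p, u} mod 3 + 1"
      using assms pu by (auto simp: \<nu> dart_rot_def)
  qed
qed

end

section \<open>The threefold cover of a plane graph\<close>

definition succ3 :: "nat \<Rightarrow> nat" where
  "succ3 i = Suc i mod 3"

lemma funpow_succ3: "(succ3 ^^ k) i = (i + k) mod 3" if "i < 3"
  using that by (induction k) (simp_all add: succ3_def mod_Suc_eq)

lemma funpow_succ3_dvd: "3 dvd k \<Longrightarrow> i < 3 \<Longrightarrow> (succ3 ^^ k) i = i"
  by (auto simp: funpow_succ3 elim!: dvdE)

lemma bij_succ3: "bij_betw succ3 {..<3} {..<3}"
proof (rule bij_betw_byWitness[where f' = "succ3 \<circ> succ3"])
  have "(succ3 ^^ 3) i = i" if "i < 3" for i using that by (rule funpow_succ3_dvd[rotated]) simp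
  then show "\<forall>i\<in>{..<3}. (succ3 \<circ> succ3) (succ3 i) = i" "\<forall>i\<in>{..<3}. succ3 ((succ3 \<circ> succ3) i) = i"
    by (simp_all add: numeral_3_eq_3)
qed (auto simp: succ3_def)

locale plane_graph_mod3 = rotation_graph +
  assumes connected: "connected_graph V E"
    and euler: "int (card V) - int (card E) + int (card (faces E rot)) = 2"
    and vertex_degree: "\<And>v. v \<in> V \<Longrightarrow> nbrs E v \<noteq> {} \<and> 3 dvd card (nbrs E v)"
    and face_length: "\<And>F. F \<in> faces E rot \<Longrightarrow> 3 dvd card F"
begin

lemma darts_nonempty: "darts E \<noteq> {}"
proof
  assume "darts E = {}"
  then have "V = {}" using vertex_degree by (auto simp: darts_eq_Sigma)
  with \<open>darts E = {}\<close> euler show False by (simp add: faces_def)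
qed

lemma darts_closed_eq:
  assumes "A \<subseteq> darts E" "A \<noteq> {}"
    and rot_closed: "\<And>d. d \<in> A \<Longrightarrow> dart_rot rot d \<in> A"
    and swap_closed: "\<And>d. d \<in> A \<Longrightarrow> prod.swap d \<in> A"
  shows "A = darts E"
proof -
  have around: "(p, w) \<in> A" if pu: "(p, u) \<in> A" and w: "w \<in> nbrs E p" for p u w
  proof -
    have "p \<in> V" "u \<in> nbrs E p" using pu assms(1) by (auto simp: darts_eq_Sigma)
    then obtain k where "(rot p ^^ k) u = w" using rot_transitive w by blast
    moreover have "(dart_rot rot ^^ k) (p, u) \<in> A"
      by (induction k) (use pu rot_closed in auto)
    ultimately show ?thesis by (simp add: funpow_dart_rot)
  qed
  obtain p0 u0 where "(p0, u0) \<in> A" using assms(2) by auto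
  have reach: "(v, w) \<in> A" if "(p0, v) \<in> {(x, y). {x, y} \<in> E}\<^sup>*" "w \<in> nbrs E v" for v w
    using that
  proof (induction arbitrary: w rule: rtrancl_induct)
    case base
    then show ?case using around \<open>(p0, u0) \<in> A\<close> by blast
  next
    case (step y z)
    then have "(y, z) \<in> A" by (simp add: nbrs_def)
    then have "(z, y) \<in> A" using swap_closed by force
    then show ?case using around step.prems by blast
  qed
  show ?thesis
  proof (intro equalityI subsetI)
    fix d assume "d \<in> darts E"
    then obtain v w where "d = (v, w)" "v \<in> V" "w \<in> nbrs E v" by (auto simp: darts_eq_Sigma)
    moreover have "p0 \<in> V" using \<open>(p0, u0) \<in> A\<close> assms(1) by (auto simp: darts_eq_Sigma)
    ultimately show "d \<in> A" using connected reach by (simp add: connected_graph_def)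
  qed (use assms(1) in blast)
qed

definition cover :: "(('a \<times> 'a) \<times> nat) set" where
  "cover = darts E \<times> {..<3}"

definition lift_rot :: "('a \<times> 'a) \<times> nat \<Rightarrow> ('a \<times> 'a) \<times> nat" where
  "lift_rot = map_prod (dart_rot rot) succ3"

definition lift_swap :: "('a \<times> 'a) \<times> nat \<Rightarrow> ('a \<times> 'a) \<times> nat" where
  "lift_swap = map_prod prod.swap id"

abbreviation sheets :: "((('a \<times> 'a) \<times> nat) \<times> ('a \<times> 'a) \<times> nat) set" where
  "sheets \<equiv> equivcl (perm_graph cover lift_rot \<union> perm_graph cover lift_swap)"

lemma finite_cover: "finite cover"
  by (simp add: cover_def finite_darts)

lemma bij_lift_rot: "bij_betw lift_rot cover cover"
  unfolding lift_rot_def cover_def using bij_dart_rot bij_succ3 by (rule bij_betw_map_prod)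

lemma bij_lift_swap: "bij_betw lift_swap cover cover"
  unfolding lift_swap_def cover_def using bij_swap_darts bij_betw_id by (rule bij_betw_map_prod)

lemma lift_rot_lift_swap: "lift_rot \<circ> lift_swap = map_prod (face_step rot) succ3"
  by (simp add: lift_rot_def lift_swap_def face_step_eq flip: map_prod_compose)

lemma num_cycles_lift_rot: "3 * card V \<le> num_cycles cover lift_rot"
proof -
  have "3 dvd card (cycle_of (darts E) (dart_rot rot) d)" if "d \<in> darts E" for d
  proof -
    obtain p u where d: "d = (p, u)" by (cases d)
    then have "p \<in> V" using that by (simp add: darts_eq_Sigma)
    have "{d' \<in> darts E. fst d' = fst d} = {p} \<times> nbrs E p"
      using d \<open>p \<in> V\<close> by (auto simp: darts_eq_Sigma)
    then show ?thesis using cycle_of_dart_rot[OF that] vertex_degree[OF \<open>p \<in> V\<close>]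
      by (simp add: card_cartesian_product_singleton)
  qed
  then have "card {..<3::nat} * num_cycles (darts E) (dart_rot rot) \<le> num_cycles cover lift_rot"
    unfolding cover_def lift_rot_def
    using finite_darts finite_lessThan bij_dart_rot bij_succ3
    by (intro num_cycles_map_prod_ge) (simp_all add: funpow_succ3_dvd)
  then show ?thesis using num_cycles_dart_rot vertex_degree by simp
qed

lemma num_cycles_lift_swap: "3 * card E \<le> num_cycles cover lift_swap"
proof -
  have "card {..<3::nat} * num_cycles (darts E) prod.swap \<le> num_cycles cover lift_swap"
    unfolding cover_def lift_swap_def
    using finite_darts finite_lessThan bij_swap_darts bij_betw_id
    by (intro num_cycles_map_prod_ge) simp_all
  then show ?thesis using num_cycles_swap by simp
qed

lemma num_cycles_lift_face_step: "3 * card (faces E rot) \<le> num_cycles cover (lift_rot \<circ> lift_swap)"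
proof -
  have "3 dvd card (cycle_of (darts E) (face_step rot) d)" if "d \<in> darts E" for d
    using face_length that cycle_of_face_step[OF that] by (simp add: faces_def)
  then have "card {..<3::nat} * num_cycles (darts E) (face_step rot)
      \<le> num_cycles cover (lift_rot \<circ> lift_swap)"
    unfolding cover_def lift_rot_lift_swap
    using finite_darts finite_lessThan bij_face_step bij_succ3
    by (intro num_cycles_map_prod_ge) (simp_all add: funpow_succ3_dvd)
  then show ?thesis using num_cycles_face_step by simp
qed

lemma three_le_card_sheets: "3 \<le> card (cover // sheets)"
proof -
  have "num_cycles cover lift_rot + num_cycles cover lift_swap + num_cycles cover (lift_rot \<circ> lift_swap)
      \<le> card cover + 2 * card (cover // sheets)"
    using finite_cover bij_lift_rot bij_lift_swap by (rule num_cycles_hypermap_bound)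
  moreover have "card cover = 6 * card E"
    by (simp add: cover_def card_cartesian_product card_darts)
  ultimately show ?thesis
    using num_cycles_lift_rot num_cycles_lift_swap num_cycles_lift_face_step euler by linarith
qed

lemma sheets_step:
  assumes "d \<in> darts E" "i < 3"
  shows "((d, i), (dart_rot rot d, succ3 i)) \<in> sheets" "((d, i), (prod.swap d, i)) \<in> sheets"
  using assms by (auto intro!: equivcl_incl simp: perm_graph_def cover_def lift_rot_def lift_swap_def)

lemma sheet_meets_fibre:
  assumes "z \<in> cover" "d \<in> darts E"
  shows "\<exists>i<3. (z, (d, i)) \<in> sheets"
proof -
  let ?A = "{d \<in> darts E. \<exists>i<3. (z, (d, i)) \<in> sheets}"
  have "?A = darts E"
  proof (rule darts_closed_eq)
    obtain d' i where "z = (d', i)" "d' \<in> darts E" "i < 3" using assms(1) by (auto simp: cover_def)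
    then have "d' \<in> ?A" by auto
    then show "?A \<noteq> {}" by blast
    show "dart_rot rot d \<in> ?A" if d: "d \<in> ?A" for d
    proof -
      obtain i where i: "d \<in> darts E" "i < 3" "(z, (d, i)) \<in> sheets" using d by blast
      then have "(z, (dart_rot rot d, succ3 i)) \<in> sheets"
        using sheets_step(1) by (blast intro: equivcl_trans)
      moreover have "succ3 i < 3" by (simp add: succ3_def)
      ultimately show ?thesis using dart_rot_in_darts i(1) by blast
    qed
    show "prod.swap d \<in> ?A" if d: "d \<in> ?A" for d
    proof -
      obtain i where i: "d \<in> darts E" "i < 3" "(z, (d, i)) \<in> sheets" using d by blast
      then have "(z, (prod.swap d, i)) \<in> sheets"
        using sheets_step(2) by (blast intro: equivcl_trans)
      then show ?thesis using swap_in_darts i by blast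
    qed
  qed blast
  then show ?thesis using assms(2) by blast
qed

text \<open>Every sheet meets the three-element fibre over d, and there are at least three sheets,
  so the fibre meets each sheet exactly once.\<close>
lemma sheets_fibre_inj:
  assumes "d \<in> darts E" "i < 3" "j < 3" "((d, i), (d, j)) \<in> sheets"
  shows "i = j"
proof -
  let ?sheet = "\<lambda>i. sheets `` {(d, i)}"
  have "?sheet ` {..<3} = cover // sheets"
  proof (intro equalityI subsetI)
    fix C assume "C \<in> ?sheet ` {..<3}"
    then show "C \<in> cover // sheets" using assms(1) by (auto simp: cover_def intro: quotientI)
  next
    fix C assume "C \<in> cover // sheets"
    then obtain z where z: "C = sheets `` {z}" "z \<in> cover" by (rule quotientE)
    then obtain i where "i < 3" "(z, (d, i)) \<in> sheets" using sheet_meets_fibre assms(1) by blast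
    then have "C = ?sheet i" using z(1) by (simp add: eq_equiv_class_iff[OF equiv_equivcl])
    then show "C \<in> ?sheet ` {..<3}" using \<open>i < 3\<close> by simp
  qed
  then have "card (?sheet ` {..<3}) = card {..<3::nat}"
    using three_le_card_sheets card_image_le[of "{..<3::nat}" ?sheet] by simp
  then have "inj_on ?sheet {..<3}" by (rule eq_card_imp_inj_on[rotated]) simp
  moreover have "?sheet i = ?sheet j" using assms(4) by (simp add: eq_equiv_class_iff[OF equiv_equivcl])
  ultimately show ?thesis using assms(2,3) by (auto dest: inj_onD)
qed

theorem exists_sheet_labelling:
  "\<exists>l. \<forall>d\<in>darts E. l d < 3 \<and> l (dart_rot rot d) = Suc (l d) mod 3 \<and> l (prod.swap d) = l d"
proof -
  obtain d0 where d0: "d0 \<in> darts E" using darts_nonempty by blast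
  have "(d0, 0) \<in> cover" using d0 by (simp add: cover_def)
  have unique: "\<exists>!i. i < 3 \<and> ((d0, 0), (d, i)) \<in> sheets" if "d \<in> darts E" for d
  proof (rule ex_ex1I)
    show "\<exists>i. i < 3 \<and> ((d0, 0), (d, i)) \<in> sheets"
      using sheet_meets_fibre[OF \<open>(d0, 0) \<in> cover\<close> that] by blast
    show "i = j" if "i < 3 \<and> ((d0, 0), (d, i)) \<in> sheets" "j < 3 \<and> ((d0, 0), (d, j)) \<in> sheets" for i j
      using that sheets_fibre_inj[OF \<open>d \<in> darts E\<close>] by (blast intro: equivcl_trans equivcl_sym)
  qed
  define l where "l d = (THE i. i < 3 \<and> ((d0, 0), (d, i)) \<in> sheets)" for d
  have l: "l d < 3" "((d0, 0), (d, l d)) \<in> sheets" if "d \<in> darts E" for d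
    using theI'[OF unique[OF that]] by (simp_all add: l_def)
  have l_eqI: "l d = i" if "d \<in> darts E" "i < 3" "((d0, 0), (d, i)) \<in> sheets" for d i
    unfolding l_def using the1_equality[OF unique[OF that(1)]] that(2,3) by blast
  show ?thesis
  proof (intro exI ballI conjI)
    fix d assume d: "d \<in> darts E"
    show "l d < 3" using l(1)[OF d] .
    show "l (dart_rot rot d) = Suc (l d) mod 3"
      using dart_rot_in_darts[OF d] l[OF d] sheets_step(1)[OF d]
      by (intro l_eqI) (auto simp: succ3_def intro: equivcl_trans)
    show "l (prod.swap d) = l d"
      using swap_in_darts[OF d] l[OF d] sheets_step(2)[OF d]
      by (intro l_eqI) (auto intro: equivcl_trans)
  qed
qed

end

theorem proposition2p9:
  fixes V :: "'a set" and E :: "'a set set" and rot :: "'a \<Rightarrow> 'a \<Rightarrow> 'a"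
  assumes "simple_graph V E"
    and "connected_graph V E"
    and "cubic V E"
    and "plane_embedding V E rot"
    and "\<forall>F\<in>faces E rot. 3 dvd card F"
  shows "\<exists>\<nu> :: 'a set \<Rightarrow> nat.
           (\<forall>e\<in>E. \<nu> e \<in> {1, 2, 3}) \<and>
           (\<forall>p\<in>V. \<forall>u\<in>nbrs E p. \<nu> {p, rot p u} = \<nu> {p, u} mod 3 + 1)"
proof -
  interpret plane_graph_mod3 V E rot
    using assms by unfold_locales (auto simp: plane_embedding_def cubic_def)
  obtain l where "\<forall>d\<in>darts E. l d < 3 \<and> l (dart_rot rot d) = Suc (l d) mod 3 \<and> l (prod.swap d) = l d"
    using exists_sheet_labelling by blast
  then show ?thesis by (rule edge_numbering_of_dart_labelling)
qed

end
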